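(* Let $S$ be a poset, $S\otimes_i G_i$ a terminating ordered join, and $\sigma\colon S\to S$ a weakly order-preserving involution. If $G_i\simeq_1 G_{\sigma(i)}$ for all $i\in S$ and $\sigma$ has no fixed points, then $S\otimes_i G_i\simeq_0\mathbf{0}$.
   Context: All games are impartial combinatorial games under normal play; a game is determined by its set of options, and $G \to G'$ means $G'$ is an option of $G$. A game is terminating if it admits no infinite sequence of moves. $\mathbf{0}$ denotes the game with no options. The Grundy number of a terminating game $G$ is the ordinal $\Gamma_0(G)=\operatorname{mex}\{\Gamma_0(G') : G\to G'\}$, where $\operatorname{mex}\Lambda$ is the least ordinal not in the set of ordinals $\Lambda$. The Grundy set is $\Gamma_1(G)=\{\Gamma_0(G') : G\to G'\}$. $G\simeq_0 H$ means $\Gamma_0(G)=\Gamma_0(H)$; $G\simeq_1 H$ means $\Gamma_1(G)=\Gamma_1(H)$. Ordered join: for a poset $S$ and a family $(G_i)_{i\in S}$ of games, $S \otimes_i G_i$ is the game whose options are exactly the ordered joins $S \otimes_i G'_i$ obtained by choosing one $i_0\in S$ and an option $G_{i_0}\to G'_{i_0}$, and setting $G'_i=\mathbf{0}$ for all $i>i_0$ and $G'_i=G_i$ for all other $i\ne i_0$. An involution $\sigma\colon S\to S$ (i.e. $\sigma\circ\sigma=\mathrm{id}$) is weakly order-preserving if for each $i\in S$ the set $\{j\in S : i<j \text{ or } \sigma(i)<j\}$ is mapped onto itself by $\sigma$. *)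

theory Defs
  imports Main
begin

(* Games are represented as positions (vertices) of a game graph given by a move
   relation M :: 'g => 'g => bool; "M x y" means y is an option of x. *)

definition terminating :: "('g \<Rightarrow> 'g \<Rightarrow> bool) \<Rightarrow> 'g \<Rightarrow> bool" where
  "terminating M x \<longleftrightarrow> \<not> (\<exists>f. f 0 = x \<and> (\<forall>n. M (f n) (f (Suc n))))"

definition options :: "('g \<Rightarrow> 'g \<Rightarrow> bool) \<Rightarrow> 'g \<Rightarrow> 'g set" where
  "options M x = {y. M x y}"

definition grundy_fun :: "('g \<Rightarrow> 'g \<Rightarrow> bool) \<Rightarrow> ('g \<Rightarrow> 'o::wellorder) \<Rightarrow> bool" where
  "grundy_fun M \<gamma> \<longleftrightarrow>
     (\<forall>x. terminating M x \<longrightarrow>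
        \<gamma> x \<notin> \<gamma> ` options M x \<and> (\<forall>a. a < \<gamma> x \<longrightarrow> a \<in> \<gamma> ` options M x))"

definition ozero :: "'o::wellorder" where
  "ozero = (LEAST a. True)"

(* Positions are families f :: 'i => 'g option, where None stands for the game 0.
   A move chooses i0 in S and a move G_{i0} -> G'_{i0}, replaces the entries at
   all i > i0 (i in S) by 0, and leaves the others unchanged. *)
definition join_move :: "'i::order set \<Rightarrow> ('g \<Rightarrow> 'g \<Rightarrow> bool)
      \<Rightarrow> ('i \<Rightarrow> 'g option) \<Rightarrow> ('i \<Rightarrow> 'g option) \<Rightarrow> bool" where
  "join_move S M f f' \<longleftrightarrow>
     (\<exists>i0\<in>S. \<exists>g g'. f i0 = Some g \<and> M g g' \<and>
        f' = (\<lambda>j. if j = i0 then Some g' else if j \<in> S \<and> i0 < j then None else f j))"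

definition join_pos :: "'i set \<Rightarrow> ('i \<Rightarrow> 'g) \<Rightarrow> ('i \<Rightarrow> 'g option)" where
  "join_pos S G = (\<lambda>i. if i \<in> S then Some (G i) else None)"

definition involution_on :: "'i set \<Rightarrow> ('i \<Rightarrow> 'i) \<Rightarrow> bool" where
  "involution_on S \<sigma> \<longleftrightarrow> (\<forall>i\<in>S. \<sigma> i \<in> S \<and> \<sigma> (\<sigma> i) = i)"

definition weakly_order_preserving :: "'i::order set \<Rightarrow> ('i \<Rightarrow> 'i) \<Rightarrow> bool" where
  "weakly_order_preserving S \<sigma> \<longleftrightarrow>
     (\<forall>i\<in>S. \<sigma> ` {j\<in>S. i < j \<or> \<sigma> i < j} = {j\<in>S. i < j \<or> \<sigma> i < j})"

end

theory Submission
  imports Defs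
begin

text \<open>The second player wins by mirroring: every move at a component \<open>i\<close> is answered at
  \<open>\<sigma> i\<close> (or, if necessary, again at \<open>i\<close>), so that the nonzero components keep coming in
  \<open>\<sigma>\<close>-pairs of equal Grundy value. Weak order preservation guarantees that the components
  cleared by a move at \<open>i\<close> or at \<open>\<sigma> i\<close> form a \<open>\<sigma>\<close>-invariant set lying above both, and that
  \<open>i\<close> and \<open>\<sigma> i\<close> are incomparable, so the answer never disturbs the pair just played.
  Positions all of whose moves can be answered back into the invariant have Grundy value \<open>0\<close>,
  by well-founded induction along two moves.\<close>

lemma terminating_step:
  assumes "terminating M x" "M x y"
  shows "terminating M y"
proof -
  have False if f: "f 0 = y" "\<forall>n. M (f n) (f (Suc n))" for f
  proof -
    define f' where "f' n = (case n of 0 \<Rightarrow> x | Suc m \<Rightarrow> f m)" for n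
    have "f' 0 = x \<and> (\<forall>n. M (f' n) (f' (Suc n)))"
      using f assms(2) by (auto simp: f'_def split: nat.split)
    then show False
      using assms(1) unfolding terminating_def by blast
  qed
  then show ?thesis
    unfolding terminating_def by blast
qed

lemma wf_terminating_moves: "wf {(y, x). terminating M x \<and> M x y}"
proof -
  have False if "\<forall>n. (f (Suc n), f n) \<in> {(y, x). terminating M x \<and> M x y}" for f
    using that unfolding terminating_def by blast
  then show ?thesis
    unfolding wf_iff_no_infinite_down_chain by blast
qed

definition join_update :: "'i::order set \<Rightarrow> ('i \<Rightarrow> 'g option) \<Rightarrow> 'i \<Rightarrow> 'g \<Rightarrow> 'i \<Rightarrow> 'g option" where
  "join_update S f i x = (\<lambda>j. if j = i then Some x else if j \<in> S \<and> i < j then None else f j)"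

lemma join_move_iff:
  "join_move S M f f' \<longleftrightarrow> (\<exists>i\<in>S. \<exists>g g'. f i = Some g \<and> M g g' \<and> f' = join_update S f i g')"
  unfolding join_move_def join_update_def ..

lemma join_moveI: "i \<in> S \<Longrightarrow> f i = Some g \<Longrightarrow> M g g' \<Longrightarrow> join_move S M f (join_update S f i g')"
  unfolding join_move_iff by blast

lemma terminating_join_component:
  assumes "terminating (join_move S M) f" "i \<in> S" "f i = Some g"
  shows "terminating M g"
proof -
  have False if h: "h 0 = g" "\<forall>n. M (h n) (h (Suc n))" for h
  proof -
    define F where "F n = (if n = 0 then f else join_update S f i (h n))" for n
    have "join_move S M (F n) (F (Suc n))" for n
    proof -
      have "F n i = Some (h n)"
        using h(1) assms(3) by (simp add: F_def join_update_def)
      then have "join_move S M (F n) (join_update S (F n) i (h (Suc n)))"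
        using assms(2) h(2) by (blast intro: join_moveI)
      moreover have "F (Suc n) = join_update S (F n) i (h (Suc n))"
        by (auto simp: F_def join_update_def fun_eq_iff)
      ultimately show ?thesis
        by simp
    qed
    moreover have "F 0 = f"
      by (simp add: F_def)
    ultimately show False
      using assms(1) unfolding terminating_def by blast
  qed
  then show ?thesis
    unfolding terminating_def by blast
qed

lemma grundy_fun_option_neq:
  assumes "grundy_fun M \<gamma>" "terminating M x" "M x y"
  shows "\<gamma> y \<noteq> \<gamma> x"
  using assms unfolding grundy_fun_def options_def by (metis imageI mem_Collect_eq)

lemma grundy_fun_less_option:
  assumes "grundy_fun M \<gamma>" "terminating M x" "a < \<gamma> x"
  obtains y where "M x y" "\<gamma> y = a"
  using assms unfolding grundy_fun_def options_def by blast

lemma option_eq_grundy_if_grundy_sets_eq: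
  assumes "\<gamma> ` options M x = \<gamma> ` options M y" "M x x'"
  obtains y' where "M y y'" "\<gamma> y' = \<gamma> x'"
proof -
  have "\<gamma> x' \<in> \<gamma> ` options M x"
    using assms(2) by (simp add: options_def)
  then have "\<gamma> x' \<in> \<gamma> ` options M y"
    by (simp only: assms(1))
  then show ?thesis
    using that unfolding options_def by auto
qed

lemma grundy_fun_eq_if_options_eq:
  assumes "grundy_fun M \<gamma>" "terminating M x" "terminating M y"
    and "\<gamma> ` options M x = \<gamma> ` options M y"
  shows "\<gamma> x = \<gamma> y"
proof -
  have mex: "\<gamma> z \<notin> \<gamma> ` options M z \<and> (\<forall>a. a < \<gamma> z \<longrightarrow> a \<in> \<gamma> ` options M z)"
    if "terminating M z" for z
    using assms(1) that unfolding grundy_fun_def by blast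
  show ?thesis
    using mex[OF assms(2)] mex[OF assms(3)] assms(4) by (metis linorder_neqE)
qed

lemma ozero_le: "ozero \<le> (a::'o::wellorder)"
  unfolding ozero_def by (rule Least_le) simp

lemma grundy_fun_eq_ozero_if_answerable:
  assumes grundy: "grundy_fun J \<delta>"
    and answer: "\<And>x y. terminating J x \<Longrightarrow> P x \<Longrightarrow> J x y \<Longrightarrow> \<exists>z. J y z \<and> P z"
  shows "terminating J x \<Longrightarrow> P x \<Longrightarrow> \<delta> x = ozero"
proof (induction x rule: wf_induct[OF wf_trancl[OF wf_terminating_moves[of J]]])
  case (1 x)
  show ?case
  proof (rule ccontr)
    assume "\<delta> x \<noteq> ozero"
    then have "ozero < \<delta> x"
      using ozero_le[of "\<delta> x"] by auto
    then obtain y where y: "J x y" "\<delta> y = ozero"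
      using grundy_fun_less_option[OF grundy "1.prems"(1)] by blast
    obtain z where z: "J y z" "P z"
      using answer[OF "1.prems" y(1)] by blast
    have Ty: "terminating J y"
      using terminating_step "1.prems"(1) y(1) .
    have Tz: "terminating J z"
      using terminating_step Ty z(1) .
    have "(y, x) \<in> {(y, x). terminating J x \<and> J x y}" "(z, y) \<in> {(y, x). terminating J x \<and> J x y}"
      using "1.prems"(1) Ty y(1) z(1) by simp_all
    then have "(z, x) \<in> {(y, x). terminating J x \<and> J x y}\<^sup>+"
      by (meson r_into_trancl trancl_into_trancl2)
    then have "\<delta> z = \<delta> y"
      using "1.IH" Tz z(2) y(2) by metis
    then show False
      using grundy_fun_option_neq[OF grundy Ty z(1)] by simp
  qed
qed

lemma involution_onD:
  assumes "involution_on S \<sigma>" "i \<in> S"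
  shows "\<sigma> i \<in> S" "\<sigma> (\<sigma> i) = i"
  using assms unfolding involution_on_def by auto

lemma weakly_order_preserving_above_iff:
  assumes inv: "involution_on S \<sigma>" and wop: "weakly_order_preserving S \<sigma>"
    and "i \<in> S" "j \<in> S"
  shows "\<sigma> j \<in> {l\<in>S. i < l \<or> \<sigma> i < l} \<longleftrightarrow> j \<in> {l\<in>S. i < l \<or> \<sigma> i < l}"
proof -
  let ?U = "{l\<in>S. i < l \<or> \<sigma> i < l}"
  have image: "\<sigma> ` ?U = ?U"
    using bspec[OF wop[unfolded weakly_order_preserving_def] \<open>i \<in> S\<close>] .
  show ?thesis
  proof
    assume "\<sigma> j \<in> ?U"
    then have "\<sigma> j \<in> \<sigma> ` ?U"
      by (simp only: image)
    then obtain u where "\<sigma> j = \<sigma> u" "u \<in> ?U"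
      by (rule imageE)
    moreover have "j = \<sigma> (\<sigma> j)" "u = \<sigma> (\<sigma> u)"
      using involution_onD(2)[OF inv] \<open>j \<in> S\<close> \<open>u \<in> ?U\<close> by auto
    ultimately show "j \<in> ?U"
      by simp
  next
    assume "j \<in> ?U"
    then have "\<sigma> j \<in> \<sigma> ` ?U"
      by (rule imageI)
    then show "\<sigma> j \<in> ?U"
      by (simp only: image)
  qed
qed

lemma weakly_order_preserving_incomparable:
  assumes inv: "involution_on S \<sigma>" and wop: "weakly_order_preserving S \<sigma>" and "i \<in> S"
  shows "\<not> i < \<sigma> i" "\<not> \<sigma> i < i"
proof -
  have not_less: "\<not> l < \<sigma> l" if "l \<in> S" for l
  proof
    assume less: "l < \<sigma> l"
    then have "\<sigma> l \<in> {j\<in>S. l < j \<or> \<sigma> l < j}"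
      using involution_onD(1)[OF inv \<open>l \<in> S\<close>] by simp
    then have "\<sigma> (\<sigma> l) \<in> {j\<in>S. l < j \<or> \<sigma> l < j}"
      using weakly_order_preserving_above_iff[OF inv wop \<open>l \<in> S\<close> involution_onD(1)[OF inv \<open>l \<in> S\<close>]]
      by blast
    then show False
      using less involution_onD(2)[OF inv \<open>l \<in> S\<close>] by auto
  qed
  show "\<not> i < \<sigma> i"
    using not_less[OF \<open>i \<in> S\<close>] .
  show "\<not> \<sigma> i < i"
    using not_less[OF involution_onD(1)[OF inv \<open>i \<in> S\<close>]] involution_onD(2)[OF inv \<open>i \<in> S\<close>] by simp
qed

subsection \<open>The mirror strategy\<close>

text \<open>The invariant of the mirror strategy. Equal Grundy sets are needed only while some
  component above the pair is nonzero: a move at the pair then clears that component, so it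
  can only be answered at the partner, which must offer an option of the same Grundy value.\<close>

definition paired_at :: "'i::order set \<Rightarrow> ('g \<Rightarrow> 'g \<Rightarrow> bool) \<Rightarrow> ('g \<Rightarrow> 'o) \<Rightarrow> ('i \<Rightarrow> 'i)
    \<Rightarrow> ('i \<Rightarrow> 'g option) \<Rightarrow> 'i \<Rightarrow> bool" where
  "paired_at S M \<gamma> \<sigma> f i \<longleftrightarrow> (f i = None \<longleftrightarrow> f (\<sigma> i) = None) \<and>
     (\<forall>g h. f i = Some g \<longrightarrow> f (\<sigma> i) = Some h \<longrightarrow> \<gamma> g = \<gamma> h \<and>
        ((\<exists>j\<in>S. (i < j \<or> \<sigma> i < j) \<and> f j \<noteq> None) \<longrightarrow> \<gamma> ` options M g = \<gamma> ` options M h))"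

definition paired :: "'i::order set \<Rightarrow> ('g \<Rightarrow> 'g \<Rightarrow> bool) \<Rightarrow> ('g \<Rightarrow> 'o) \<Rightarrow> ('i \<Rightarrow> 'i)
    \<Rightarrow> ('i \<Rightarrow> 'g option) \<Rightarrow> bool" where
  "paired S M \<gamma> \<sigma> f \<longleftrightarrow> (\<forall>i\<in>S. paired_at S M \<gamma> \<sigma> f i)"

lemma paired_atD:
  assumes "paired_at S M \<gamma> \<sigma> f i" "f i = Some g"
  obtains h where "f (\<sigma> i) = Some h" "\<gamma> g = \<gamma> h"
    and "\<exists>j\<in>S. (i < j \<or> \<sigma> i < j) \<and> f j \<noteq> None \<Longrightarrow> \<gamma> ` options M g = \<gamma> ` options M h"
proof -
  have "f (\<sigma> i) \<noteq> None"
    using assms unfolding paired_at_def by simp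
  then obtain h where "f (\<sigma> i) = Some h"
    by blast
  moreover from this have "\<gamma> g = \<gamma> h \<and> ((\<exists>j\<in>S. (i < j \<or> \<sigma> i < j) \<and> f j \<noteq> None) \<longrightarrow>
      \<gamma> ` options M g = \<gamma> ` options M h)"
    using assms unfolding paired_at_def by simp
  ultimately show ?thesis
    using that by blast
qed

lemma paired_at_zero: "f i = None \<Longrightarrow> f (\<sigma> i) = None \<Longrightarrow> paired_at S M \<gamma> \<sigma> f i"
  unfolding paired_at_def by simp

lemma paired_at_top:
  assumes "f i = Some g" "f (\<sigma> i) = Some h" "\<gamma> g = \<gamma> h"
    and "\<forall>j\<in>S. i < j \<or> \<sigma> i < j \<longrightarrow> f j = None"
  shows "paired_at S M \<gamma> \<sigma> f i"
  using assms unfolding paired_at_def by auto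

lemma paired_at_transfer:
  assumes "paired_at S M \<gamma> \<sigma> f i" "f' i = f i" "f' (\<sigma> i) = f (\<sigma> i)"
    and "\<forall>j\<in>S. f' j \<noteq> None \<longrightarrow> f j \<noteq> None"
  shows "paired_at S M \<gamma> \<sigma> f' i"
proof -
  have "(\<exists>j\<in>S. (i < j \<or> \<sigma> i < j) \<and> f' j \<noteq> None) \<longrightarrow>
      (\<exists>j\<in>S. (i < j \<or> \<sigma> i < j) \<and> f j \<noteq> None)"
    using assms(4) by blast
  then show ?thesis
    using assms(1) unfolding paired_at_def assms(2,3) by blast
qed

lemma paired_join_pos:
  assumes gamma: "grundy_fun M \<gamma>"
    and termin: "terminating (join_move S M) (join_pos S G)"
    and inv: "involution_on S \<sigma>"
    and sim1: "\<forall>i\<in>S. \<gamma> ` options M (G i) = \<gamma> ` options M (G (\<sigma> i))"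
  shows "paired S M \<gamma> \<sigma> (join_pos S G)"
  unfolding paired_def
proof
  fix i assume "i \<in> S"
  then have "\<sigma> i \<in> S"
    by (rule involution_onD[OF inv])
  then have "\<gamma> (G i) = \<gamma> (G (\<sigma> i))"
    using grundy_fun_eq_if_options_eq[OF gamma] terminating_join_component[OF termin] sim1 \<open>i \<in> S\<close>
    by (simp add: join_pos_def)
  then show "paired_at S M \<gamma> \<sigma> (join_pos S G) i"
    using \<open>i \<in> S\<close> \<open>\<sigma> i \<in> S\<close> sim1 by (auto simp: paired_at_def join_pos_def)
qed

text \<open>Every answer of the mirror strategy produces a position of this shape.\<close>

definition pair_update :: "'i::order set \<Rightarrow> ('i \<Rightarrow> 'i) \<Rightarrow> ('i \<Rightarrow> 'g option) \<Rightarrow> 'i \<Rightarrow> 'g \<Rightarrow> 'g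
    \<Rightarrow> 'i \<Rightarrow> 'g option" where
  "pair_update S \<sigma> f i a b = (\<lambda>j. if j = i then Some a else if j = \<sigma> i then Some b
     else if j \<in> S \<and> (i < j \<or> \<sigma> i < j) then None else f j)"

lemma paired_at_pair_update_pair:
  assumes inv: "involution_on S \<sigma>" and wop: "weakly_order_preserving S \<sigma>"
    and "i \<in> S" "\<sigma> i \<noteq> i" "\<gamma> a = \<gamma> b" and l: "l = i \<or> l = \<sigma> i"
  shows "paired_at S M \<gamma> \<sigma> (pair_update S \<sigma> f i a b) l"
proof -
  let ?f = "pair_update S \<sigma> f i a b"
  have ii: "\<sigma> (\<sigma> i) = i"
    using involution_onD[OF inv \<open>i \<in> S\<close>] by simp
  have none_above: "\<forall>j\<in>S. l < j \<or> \<sigma> l < j \<longrightarrow> ?f j = None"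
  proof (intro ballI impI)
    fix j assume "j \<in> S" "l < j \<or> \<sigma> l < j"
    then have "i < j \<or> \<sigma> i < j"
      using l ii by auto
    moreover have "j \<noteq> i" "j \<noteq> \<sigma> i"
      using calculation weakly_order_preserving_incomparable[OF inv wop \<open>i \<in> S\<close>] by auto
    ultimately show "?f j = None"
      using \<open>j \<in> S\<close> by (simp add: pair_update_def)
  qed
  consider "?f l = Some a" "?f (\<sigma> l) = Some b" | "?f l = Some b" "?f (\<sigma> l) = Some a"
    using l ii \<open>\<sigma> i \<noteq> i\<close> by (cases "l = i") (simp_all add: pair_update_def)
  then show ?thesis
  proof cases
    case 1
    show ?thesis
      using 1 \<open>\<gamma> a = \<gamma> b\<close> none_above by (rule paired_at_top)
  next
    case 2
    show ?thesis
      using 2 \<open>\<gamma> a = \<gamma> b\<close>[symmetric] none_above by (rule paired_at_top)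
  qed
qed

lemma paired_at_pair_update_other:
  assumes inv: "involution_on S \<sigma>" and wop: "weakly_order_preserving S \<sigma>"
    and "i \<in> S" "l \<in> S" "l \<noteq> i" "l \<noteq> \<sigma> i"
    and nonzero: "f i \<noteq> None" "f (\<sigma> i) \<noteq> None" and paired: "paired_at S M \<gamma> \<sigma> f l"
  shows "paired_at S M \<gamma> \<sigma> (pair_update S \<sigma> f i a b) l"
proof -
  let ?f = "pair_update S \<sigma> f i a b"
  let ?U = "{j\<in>S. i < j \<or> \<sigma> i < j}"
  have "\<sigma> l \<in> S" "\<sigma> (\<sigma> l) = l" "\<sigma> (\<sigma> i) = i"
    using involution_onD[OF inv] \<open>i \<in> S\<close> \<open>l \<in> S\<close> by auto
  then have "\<sigma> l \<noteq> i" "\<sigma> l \<noteq> \<sigma> i"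
    using \<open>l \<noteq> i\<close> \<open>l \<noteq> \<sigma> i\<close> by metis+
  have above: "\<sigma> l \<in> ?U \<longleftrightarrow> l \<in> ?U"
    by (rule weakly_order_preserving_above_iff[OF inv wop \<open>i \<in> S\<close> \<open>l \<in> S\<close>])
  show ?thesis
  proof (cases "l \<in> ?U")
    case True
    then show ?thesis
      using above \<open>l \<noteq> i\<close> \<open>l \<noteq> \<sigma> i\<close> \<open>\<sigma> l \<noteq> i\<close> \<open>\<sigma> l \<noteq> \<sigma> i\<close>
      by (simp add: pair_update_def paired_at_zero)
  next
    case False
    have "?f l = f l" "?f (\<sigma> l) = f (\<sigma> l)"
      using False above \<open>l \<noteq> i\<close> \<open>l \<noteq> \<sigma> i\<close> \<open>\<sigma> l \<noteq> i\<close> \<open>\<sigma> l \<noteq> \<sigma> i\<close> \<open>l \<in> S\<close> \<open>\<sigma> l \<in> S\<close>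
      by (simp_all add: pair_update_def)
    moreover have "\<forall>j\<in>S. ?f j \<noteq> None \<longrightarrow> f j \<noteq> None"
      using nonzero by (simp add: pair_update_def)
    ultimately show ?thesis
      using paired by (rule paired_at_transfer[rotated])
  qed
qed

lemma paired_pair_update:
  assumes inv: "involution_on S \<sigma>" and wop: "weakly_order_preserving S \<sigma>"
    and paired: "paired S M \<gamma> \<sigma> f" and "i \<in> S" "\<sigma> i \<noteq> i"
    and nonzero: "f i \<noteq> None" "f (\<sigma> i) \<noteq> None" and "\<gamma> a = \<gamma> b"
  shows "paired S M \<gamma> \<sigma> (pair_update S \<sigma> f i a b)"
  unfolding paired_def
proof
  fix l assume "l \<in> S"
  show "paired_at S M \<gamma> \<sigma> (pair_update S \<sigma> f i a b) l"
  proof (cases "l = i \<or> l = \<sigma> i")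
    case True
    with inv wop \<open>i \<in> S\<close> \<open>\<sigma> i \<noteq> i\<close> \<open>\<gamma> a = \<gamma> b\<close> show ?thesis
      by (rule paired_at_pair_update_pair)
  next
    case False
    have "paired_at S M \<gamma> \<sigma> f l"
      using paired \<open>l \<in> S\<close> unfolding paired_def ..
    with False show ?thesis
      using paired_at_pair_update_other[OF inv wop \<open>i \<in> S\<close> \<open>l \<in> S\<close> _ _ nonzero] by simp
  qed
qed

lemma paired_answer_at_partner:
  assumes inv: "involution_on S \<sigma>" and wop: "weakly_order_preserving S \<sigma>"
    and paired: "paired S M \<gamma> \<sigma> f" and "i \<in> S" "\<sigma> i \<noteq> i"
    and "f i = Some g" "f (\<sigma> i) = Some h" "M h h'" "\<gamma> h' = \<gamma> g'"
  shows "join_move S M (join_update S f i g') (pair_update S \<sigma> f i g' h')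
    \<and> paired S M \<gamma> \<sigma> (pair_update S \<sigma> f i g' h')"
proof
  have "\<sigma> i \<in> S"
    using involution_onD[OF inv \<open>i \<in> S\<close>] by simp
  note incomparable = weakly_order_preserving_incomparable[OF inv wop \<open>i \<in> S\<close>]
  have "join_update S f i g' (\<sigma> i) = Some h"
    using \<open>f (\<sigma> i) = Some h\<close> \<open>\<sigma> i \<noteq> i\<close> incomparable by (simp add: join_update_def)
  with \<open>\<sigma> i \<in> S\<close> have "join_move S M (join_update S f i g') (join_update S (join_update S f i g') (\<sigma> i) h')"
    using \<open>M h h'\<close> by (rule join_moveI)
  moreover have "join_update S (join_update S f i g') (\<sigma> i) h' = pair_update S \<sigma> f i g' h'"
    using \<open>\<sigma> i \<noteq> i\<close> incomparable by (auto simp: join_update_def pair_update_def fun_eq_iff)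
  ultimately show "join_move S M (join_update S f i g') (pair_update S \<sigma> f i g' h')"
    by simp
  show "paired S M \<gamma> \<sigma> (pair_update S \<sigma> f i g' h')"
    using paired_pair_update[OF inv wop paired \<open>i \<in> S\<close> \<open>\<sigma> i \<noteq> i\<close>] assms(6,7,9) by simp
qed

lemma paired_answer_at_same:
  assumes inv: "involution_on S \<sigma>" and wop: "weakly_order_preserving S \<sigma>"
    and paired: "paired S M \<gamma> \<sigma> f" and "i \<in> S" "\<sigma> i \<noteq> i"
    and "f i = Some g" "f (\<sigma> i) = Some h" "M g' g''" "\<gamma> g'' = \<gamma> h"
    and zero_above: "\<forall>j\<in>S. i < j \<or> \<sigma> i < j \<longrightarrow> f j = None"
  shows "join_move S M (join_update S f i g') (pair_update S \<sigma> f i g'' h)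
    \<and> paired S M \<gamma> \<sigma> (pair_update S \<sigma> f i g'' h)"
proof
  note incomparable = weakly_order_preserving_incomparable[OF inv wop \<open>i \<in> S\<close>]
  have "join_update S (join_update S f i g') i g'' = pair_update S \<sigma> f i g'' h"
    using \<open>\<sigma> i \<noteq> i\<close> \<open>f (\<sigma> i) = Some h\<close> incomparable zero_above
    by (auto simp: join_update_def pair_update_def fun_eq_iff)
  moreover have "join_update S f i g' i = Some g'"
    by (simp add: join_update_def)
  with \<open>i \<in> S\<close> have "join_move S M (join_update S f i g') (join_update S (join_update S f i g') i g'')"
    using \<open>M g' g''\<close> by (rule join_moveI)
  ultimately show "join_move S M (join_update S f i g') (pair_update S \<sigma> f i g'' h)"
    by simp
  show "paired S M \<gamma> \<sigma> (pair_update S \<sigma> f i g'' h)"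
    using paired_pair_update[OF inv wop paired \<open>i \<in> S\<close> \<open>\<sigma> i \<noteq> i\<close>] assms(6,7,9) by simp
qed

lemma paired_answer:
  assumes gamma: "grundy_fun M \<gamma>"
    and inv: "involution_on S \<sigma>" and wop: "weakly_order_preserving S \<sigma>"
    and nofix: "\<forall>i\<in>S. \<sigma> i \<noteq> i"
    and T: "terminating (join_move S M) f" and paired: "paired S M \<gamma> \<sigma> f"
    and move: "join_move S M f f'"
  shows "\<exists>f''. join_move S M f' f'' \<and> paired S M \<gamma> \<sigma> f''"
proof -
  obtain i g g' where "i \<in> S" and fi: "f i = Some g" and "M g g'" and f': "f' = join_update S f i g'"
    using move unfolding join_move_iff by blast
  have "\<sigma> i \<in> S" "\<sigma> i \<noteq> i"
    using involution_onD[OF inv \<open>i \<in> S\<close>] nofix \<open>i \<in> S\<close> by auto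
  have "paired_at S M \<gamma> \<sigma> f i"
    using paired \<open>i \<in> S\<close> unfolding paired_def by blast
  then obtain h where fk: "f (\<sigma> i) = Some h" and "\<gamma> g = \<gamma> h"
    and equal_grundy_sets: "\<exists>j\<in>S. (i < j \<or> \<sigma> i < j) \<and> f j \<noteq> None \<Longrightarrow>
      \<gamma> ` options M g = \<gamma> ` options M h"
    using fi by (rule paired_atD) blast
  have tg: "terminating M g" and th: "terminating M h"
    using terminating_join_component[OF T] \<open>i \<in> S\<close> \<open>\<sigma> i \<in> S\<close> fi fk by auto
  have "\<gamma> g' \<noteq> \<gamma> h"
    using grundy_fun_option_neq[OF gamma tg \<open>M g g'\<close>] \<open>\<gamma> g = \<gamma> h\<close> by simp
  note at_partner = paired_answer_at_partner[OF inv wop paired \<open>i \<in> S\<close> \<open>\<sigma> i \<noteq> i\<close> fi fk]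
  consider (above) "\<exists>j\<in>S. (i < j \<or> \<sigma> i < j) \<and> f j \<noteq> None"
    | (smaller) "\<gamma> g' < \<gamma> h"
    | (larger) "\<forall>j\<in>S. (i < j \<or> \<sigma> i < j) \<longrightarrow> f j = None" "\<gamma> h < \<gamma> g'"
    using \<open>\<gamma> g' \<noteq> \<gamma> h\<close> by (meson linorder_neqE)
  then show ?thesis
  proof cases
    case above
    then have "\<gamma> ` options M g = \<gamma> ` options M h"
      by (rule equal_grundy_sets)
    then obtain h' where "M h h'" "\<gamma> h' = \<gamma> g'"
      using \<open>M g g'\<close> by (rule option_eq_grundy_if_grundy_sets_eq)
    then show ?thesis
      using at_partner f' by blast
  next
    case smaller
    then obtain h' where "M h h'" "\<gamma> h' = \<gamma> g'"
      by (rule grundy_fun_less_option[OF gamma th])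
    then show ?thesis
      using at_partner f' by blast
  next
    case larger
    have "terminating M g'"
      using terminating_step[OF tg \<open>M g g'\<close>] .
    then obtain g'' where "M g' g''" "\<gamma> g'' = \<gamma> h"
      using grundy_fun_less_option[OF gamma _ larger(2)] by blast
    then show ?thesis
      using paired_answer_at_same[OF inv wop paired \<open>i \<in> S\<close> \<open>\<sigma> i \<noteq> i\<close> fi fk] larger(1) f'
      by blast
  qed
qed

theorem mainTheorem8:
  fixes S :: "'i::order set"
    and M :: "'g \<Rightarrow> 'g \<Rightarrow> bool"
    and G :: "'i \<Rightarrow> 'g"
    and \<sigma> :: "'i \<Rightarrow> 'i"
    and \<gamma> :: "'g \<Rightarrow> 'o::wellorder"
    and \<delta> :: "('i \<Rightarrow> 'g option) \<Rightarrow> 'o"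
  assumes gamma: "grundy_fun M \<gamma>"
    and delta: "grundy_fun (join_move S M) \<delta>"
    and termin: "terminating (join_move S M) (join_pos S G)"
    and inv: "involution_on S \<sigma>"
    and wop: "weakly_order_preserving S \<sigma>"
    and sim1: "\<forall>i\<in>S. \<gamma> ` options M (G i) = \<gamma> ` options M (G (\<sigma> i))"
    and nofix: "\<forall>i\<in>S. \<sigma> i \<noteq> i"
  shows "\<delta> (join_pos S G) = ozero"
  using grundy_fun_eq_ozero_if_answerable[where P = "paired S M \<gamma> \<sigma>",
      OF delta paired_answer[OF gamma inv wop nofix] termin paired_join_pos[OF gamma termin inv sim1]] .

end
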